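(* Every tuple-independent probabilistic database has the finite moments property.
   Context: Fix a countably infinite universe $U$. Facts are expressions $R(u_1,\dots,u_{\mathrm{ar}(R)})$ with $R$ from a finite schema and $u_i\in U$; an instance is a finite set of facts, $|D|$ its number of facts. A probabilistic database (PDB) is a discrete probability space $(\mathbb D,P)$ with $\mathbb D$ a nonempty countable set of instances. A PDB has the finite moments property if $\sum_{D\in\mathbb D}|D|^kP(\{D\})<\infty$ for all $k\in\mathbb N_+$. A PDB $\mathcal I$ is tuple-independent if for all $k$ and all pairwise distinct facts $f_1,\dots,f_k$, $\Pr_{I\sim\mathcal I}(f_1\in I,\dots,f_k\in I)=\prod_i\Pr_{I\sim\mathcal I}(f_i\in I)$. *)

theory Defs
  imports "HOL-Probability.Probability"
begin

type_synonym ('r, 'u) fact = "'r \<times> 'u list"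

definition is_fact :: "('r \<Rightarrow> nat) \<Rightarrow> ('r, 'u) fact \<Rightarrow> bool" where
  "is_fact ar f \<longleftrightarrow> length (snd f) = ar (fst f)"

definition is_instance :: "('r \<Rightarrow> nat) \<Rightarrow> ('r, 'u) fact set \<Rightarrow> bool" where
  "is_instance ar D \<longleftrightarrow> finite D \<and> (\<forall>f\<in>D. is_fact ar f)"

text \<open>A PDB is a discrete probability distribution (pmf) whose sample space consists of
  instances; its support is countable automatically.\<close>

definition is_PDB :: "('r \<Rightarrow> nat) \<Rightarrow> ('r, 'u) fact set pmf \<Rightarrow> bool" where
  "is_PDB ar P \<longleftrightarrow> (\<forall>D\<in>set_pmf P. is_instance ar D)"

definition finite_moments :: "('r, 'u) fact set pmf \<Rightarrow> bool" where
  "finite_moments P \<longleftrightarrow>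
     (\<forall>k::nat. k \<ge> 1 \<longrightarrow> (\<lambda>D. real (card D) ^ k * pmf P D) summable_on set_pmf P)"

definition tuple_independent :: "('r \<Rightarrow> nat) \<Rightarrow> ('r, 'u) fact set pmf \<Rightarrow> bool" where
  "tuple_independent ar P \<longleftrightarrow>
     (\<forall>fs::('r, 'u) fact list. distinct fs \<longrightarrow> (\<forall>f\<in>set fs. is_fact ar f) \<longrightarrow>
        measure_pmf.prob P {I. \<forall>f\<in>set fs. f \<in> I}
          = (\<Prod>f\<leftarrow>fs. measure_pmf.prob P {I. f \<in> I}))"

end

theory Submission
  imports Defs
begin

(* Write p f for the probability that the fact f occurs and, for a finite set S of facts,
   X = card (I \<inter> S) and s = sum of p f over S. Expanding one factor of X^(k+1) into
   indicators and using independence, induction on k gives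
   E[1{A \<subseteq> I} X^k] \<le> P(A \<subseteq> I) * prod_{i<k} (s + card A + i).
   For k = 2 this bounds the variance of X by s, so by Chebyshev X \<le> s/2 has probability
   at most 4/s. Instances are finite, so card I \<le> n with probability > 1/2 for some n, and
   card I \<ge> X forces s \<le> max (2n) 8 for every S: the p f have a finite sum B. The moment
   bound then bounds every partial sum of E[card I ^ k] by prod_{i<k} (B + i). *)

definition independent_membership :: "'a set pmf \<Rightarrow> 'a set \<Rightarrow> bool" where
  "independent_membership P F \<longleftrightarrow>
     (\<forall>A. finite A \<longrightarrow> A \<subseteq> F \<longrightarrow>
        measure_pmf.prob P {I. A \<subseteq> I} = (\<Prod>f\<in>A. measure_pmf.prob P {I. f \<in> I}))"

lemma tuple_independent_imp_independent_membership:
  fixes ar :: "'r \<Rightarrow> nat" and P :: "('r, 'u) fact set pmf"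
  assumes "tuple_independent ar P"
  shows "independent_membership P {f. is_fact ar f}"
  unfolding independent_membership_def
proof (intro allI impI)
  fix A :: "('r, 'u) fact set"
  assume A: "finite A" "A \<subseteq> {f. is_fact ar f}"
  obtain fs where fs: "set fs = A" "distinct fs"
    using finite_distinct_list[OF A(1)] by blast
  have "{I. A \<subseteq> I} = {I. \<forall>f\<in>set fs. f \<in> I}"
    using fs by auto
  then show "measure_pmf.prob P {I. A \<subseteq> I} = (\<Prod>f\<in>A. measure_pmf.prob P {I. f \<in> I})"
    using assms fs A(2) unfolding tuple_independent_def by (auto simp: prod.distinct_set_conv_list)
qed

lemma real_card_Int_eq_sum_indicator:
  assumes "finite S"
  shows "real (card (I \<inter> S)) = (\<Sum>f\<in>S. indicator {I. f \<in> I} I)"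
proof -
  have "real (card (I \<inter> S)) = (\<Sum>f\<in>S \<inter> I. 1)"
    by (simp add: Int_commute)
  also have "\<dots> = (\<Sum>f\<in>S. indicator {I. f \<in> I} I)"
    using assms by (simp add: sum.If_cases Int_def indicator_def of_bool_def)
  finally show ?thesis .
qed

lemma integrable_indicator_card_Int_power:
  assumes "finite S"
  shows "integrable (measure_pmf P) (\<lambda>I. indicator B I * real (card (I \<inter> S)) ^ k)"
proof (rule measure_pmf.integrable_const_bound[where B = "real (card S) ^ k"])
  show "AE I in measure_pmf P. norm (indicator B I * real (card (I \<inter> S)) ^ k) \<le> real (card S) ^ k"
    using assms by (auto simp: indicator_def card_mono power_mono)
qed simp

lemma integrable_card_Int_power:
  assumes "finite S"
  shows "integrable (measure_pmf P) (\<lambda>I. real (card (I \<inter> S)) ^ k)"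
  using integrable_indicator_card_Int_power[OF assms, of P UNIV k] by simp

lemma expectation_card_Int:
  assumes "finite S"
  shows "measure_pmf.expectation P (\<lambda>I. real (card (I \<inter> S)))
    = (\<Sum>f\<in>S. measure_pmf.prob P {I. f \<in> I})"
proof -
  have "measure_pmf.expectation P (\<lambda>I. real (card (I \<inter> S)))
      = (\<Sum>f\<in>S. measure_pmf.expectation P (indicator {I. f \<in> I}))"
    unfolding real_card_Int_eq_sum_indicator[OF assms]
    using integrable_indicator_card_Int_power[of "{}" P _ 0]
    by (intro Bochner_Integration.integral_sum) simp
  then show ?thesis
    by simp
qed

lemma sum_prob_superset_insert_le:
  assumes indep: "independent_membership P F" and S: "finite S" "S \<subseteq> F" and "A \<subseteq> S"
  shows "(\<Sum>f\<in>S. measure_pmf.prob P {I. insert f A \<subseteq> I})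
    \<le> measure_pmf.prob P {I. A \<subseteq> I} * ((\<Sum>f\<in>S. measure_pmf.prob P {I. f \<in> I}) + real (card A))"
proof -
  define Q where "Q B = measure_pmf.prob P {I. B \<subseteq> I}" for B
  define p where "p f = measure_pmf.prob P {I. f \<in> I}" for f
  have A: "finite A" "A \<subseteq> F"
    using assms finite_subset by blast+
  have "(\<Sum>f\<in>S. Q (insert f A)) = (\<Sum>f\<in>S - A. Q (insert f A)) + (\<Sum>f\<in>A. Q (insert f A))"
    using \<open>A \<subseteq> S\<close> S(1) by (rule sum.subset_diff)
  also have "\<dots> = (\<Sum>f\<in>S - A. p f * Q A) + (\<Sum>f\<in>A. Q A)"
  proof (intro arg_cong2[where f = "(+)"] sum.cong refl)
    fix f assume "f \<in> S - A"
    then show "Q (insert f A) = p f * Q A"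
      using indep A S(2) by (auto simp: independent_membership_def Q_def p_def)
  qed (simp add: insert_absorb)
  also have "\<dots> \<le> (\<Sum>f\<in>S. p f * Q A) + real (card A) * Q A"
    using S(1) by (intro add_mono sum_mono2) (auto simp: p_def Q_def)
  also have "\<dots> = Q A * ((\<Sum>f\<in>S. p f) + real (card A))"
    by (simp add: sum_distrib_left algebra_simps)
  finally show ?thesis
    unfolding Q_def p_def .
qed

lemma integral_superset_card_Int_Suc_power:
  assumes "finite S"
  shows "(\<integral>I. indicator {I. A \<subseteq> I} I * real (card (I \<inter> S)) ^ Suc k \<partial>measure_pmf P)
    = (\<Sum>f\<in>S. (\<integral>I. indicator {I. insert f A \<subseteq> I} I * real (card (I \<inter> S)) ^ k \<partial>measure_pmf P))"
proof -
  have "indicator {I. A \<subseteq> I} I * real (card (I \<inter> S)) ^ Suc k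
      = (\<Sum>f\<in>S. indicator {I. insert f A \<subseteq> I} I * real (card (I \<inter> S)) ^ k)" for I
    unfolding power_Suc real_card_Int_eq_sum_indicator[OF assms, of I]
    by (simp add: sum_distrib_left sum_distrib_right indicator_def)
  then show ?thesis
    using integrable_indicator_card_Int_power[OF assms]
    by (simp add: Bochner_Integration.integral_sum)
qed

lemma integral_superset_card_Int_power_le:
  assumes indep: "independent_membership P F" and S: "finite S" "S \<subseteq> F" and "A \<subseteq> S"
  shows "(\<integral>I. indicator {I. A \<subseteq> I} I * real (card (I \<inter> S)) ^ k \<partial>measure_pmf P)
    \<le> measure_pmf.prob P {I. A \<subseteq> I} *
       (\<Prod>i<k. (\<Sum>f\<in>S. measure_pmf.prob P {I. f \<in> I}) + real (card A) + real i)"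
  using \<open>A \<subseteq> S\<close>
proof (induction k arbitrary: A)
  case 0
  then show ?case by simp
next
  case (Suc k)
  define s where "s = (\<Sum>f\<in>S. measure_pmf.prob P {I. f \<in> I})"
  define Q where "Q B = measure_pmf.prob P {I. B \<subseteq> I}" for B
  define X where "X I = real (card (I \<inter> S))" for I
  define C where "C = (\<Prod>i<k. s + real (card A + 1) + real i)"
  have "s \<ge> 0"
    unfolding s_def by (simp add: sum_nonneg)
  then have "C \<ge> 0"
    unfolding C_def by (intro prod_nonneg) auto
  have "finite A"
    using Suc.prems S(1) by (rule finite_subset)
  then have card_insert_le_Suc: "real (card (insert f A)) \<le> real (card A) + 1" for f
    by (simp add: card_insert_if)
  have "(\<integral>I. indicator {I. A \<subseteq> I} I * X I ^ Suc k \<partial>measure_pmf P)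
      = (\<Sum>f\<in>S. (\<integral>I. indicator {I. insert f A \<subseteq> I} I * X I ^ k \<partial>measure_pmf P))"
    unfolding X_def using S(1) by (rule integral_superset_card_Int_Suc_power)
  also have "\<dots> \<le> (\<Sum>f\<in>S. Q (insert f A) * C)"
  proof (rule sum_mono)
    fix f assume "f \<in> S"
    then have "insert f A \<subseteq> S"
      using Suc.prems by simp
    from Suc.IH[OF this]
    have "(\<integral>I. indicator {I. insert f A \<subseteq> I} I * X I ^ k \<partial>measure_pmf P)
        \<le> Q (insert f A) * (\<Prod>i<k. s + real (card (insert f A)) + real i)"
      unfolding Q_def s_def X_def .
    also have "\<dots> \<le> Q (insert f A) * C"
      unfolding C_def using \<open>s \<ge> 0\<close> card_insert_le_Suc[of f]
      by (intro mult_left_mono prod_mono) (auto simp: Q_def)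
    finally show "(\<integral>I. indicator {I. insert f A \<subseteq> I} I * X I ^ k \<partial>measure_pmf P)
        \<le> Q (insert f A) * C" .
  qed
  also have "\<dots> = (\<Sum>f\<in>S. Q (insert f A)) * C"
    by (simp add: sum_distrib_right)
  also have "\<dots> \<le> Q A * (s + real (card A)) * C"
    using mult_right_mono[OF sum_prob_superset_insert_le[OF indep S Suc.prems] \<open>C \<ge> 0\<close>]
    unfolding Q_def s_def .
  also have "\<dots> = Q A * (\<Prod>i<Suc k. s + real (card A) + real i)"
    unfolding C_def prod.lessThan_Suc_shift by (simp add: algebra_simps)
  finally show ?case
    unfolding Q_def s_def X_def .
qed

lemma expectation_card_Int_power_le:
  assumes "independent_membership P F" "finite S" "S \<subseteq> F"
  shows "measure_pmf.expectation P (\<lambda>I. real (card (I \<inter> S)) ^ k)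
    \<le> (\<Prod>i<k. (\<Sum>f\<in>S. measure_pmf.prob P {I. f \<in> I}) + real i)"
  using integral_superset_card_Int_power_le[OF assms empty_subsetI, of k] by simp

lemma prob_card_Int_le_half_le:
  assumes "independent_membership P F" "finite S" "S \<subseteq> F"
    and s_def: "s = (\<Sum>f\<in>S. measure_pmf.prob P {I. f \<in> I})" and "s > 0"
  shows "measure_pmf.prob P {I. real (card (I \<inter> S)) \<le> s / 2} \<le> 4 / s"
proof -
  define X where "X I = real (card (I \<inter> S))" for I
  have int_X: "integrable (measure_pmf P) X"
    unfolding X_def using integrable_card_Int_power[OF \<open>finite S\<close>, of P 1] by simp
  have int_X2: "integrable (measure_pmf P) (\<lambda>I. X I ^ 2)"
    unfolding X_def by (rule integrable_card_Int_power[OF \<open>finite S\<close>])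
  have "measure_pmf.expectation P (\<lambda>I. X I ^ 2) \<le> s * (s + 1)"
    using expectation_card_Int_power_le[OF assms(1-3), of 2]
    unfolding X_def s_def by (simp add: numeral_2_eq_2 lessThan_Suc mult.commute)
  moreover have "measure_pmf.expectation P X = s"
    unfolding X_def s_def using \<open>finite S\<close> by (rule expectation_card_Int)
  ultimately have variance_le: "measure_pmf.variance P X \<le> s"
    unfolding measure_pmf.variance_eq[OF int_X int_X2] by (simp add: power2_eq_square algebra_simps)
  have "measure_pmf.prob P {I. X I \<le> s / 2}
      \<le> measure_pmf.prob P {I \<in> space (measure_pmf P). s / 2 \<le> \<bar>X I - s\<bar>}"
    by (rule measure_pmf.finite_measure_mono) (auto simp: abs_if)
  also have "\<dots> \<le> measure_pmf.variance P X / (s / 2)\<^sup>2"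
    using measure_pmf.Chebyshev_inequality[OF _ int_X2, of "s / 2"]
      \<open>measure_pmf.expectation P X = s\<close> \<open>s > 0\<close>
    by simp
  also have "\<dots> \<le> 4 / s"
    using variance_le \<open>s > 0\<close> by (simp add: field_simps power2_eq_square)
  finally show ?thesis
    unfolding X_def .
qed

lemma ex_prob_card_le_gt:
  fixes P :: "'a set pmf"
  assumes "c < 1"
  shows "\<exists>n. measure_pmf.prob P {I. card I \<le> n} > c"
proof -
  have "(\<lambda>n. measure_pmf.prob P {I. card I \<le> n}) \<longlonglongrightarrow> measure_pmf.prob P (\<Union>n. {I. card I \<le> n})"
    by (rule measure_pmf.finite_Lim_measure_incseq) (auto simp: incseq_def)
  moreover have "(\<Union>n. {I. card I \<le> n}) = UNIV"
    by auto
  ultimately have "(\<lambda>n. measure_pmf.prob P {I. card I \<le> n}) \<longlonglongrightarrow> 1"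
    by (metis measure_pmf.prob_space space_measure_pmf)
  then have "\<forall>\<^sub>F n in sequentially. c < measure_pmf.prob P {I. card I \<le> n}"
    using assms by (rule order_tendstoD(1))
  then show ?thesis
    by (auto simp: eventually_sequentially)
qed

lemma sum_prob_member_bounded:
  assumes indep: "independent_membership P F" and fin: "\<forall>I\<in>set_pmf P. finite I"
  shows "\<exists>B. \<forall>S. finite S \<longrightarrow> S \<subseteq> F \<longrightarrow> (\<Sum>f\<in>S. measure_pmf.prob P {I. f \<in> I}) \<le> B"
proof -
  obtain n where n: "measure_pmf.prob P {I. card I \<le> n} > 1 / 2"
    using ex_prob_card_le_gt[of "1 / 2"] by auto
  have "(\<Sum>f\<in>S. measure_pmf.prob P {I. f \<in> I}) \<le> max (2 * real n) 8"
    if S: "finite S" "S \<subseteq> F" for S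
  proof (rule ccontr)
    define s where "s = (\<Sum>f\<in>S. measure_pmf.prob P {I. f \<in> I})"
    assume "\<not> s \<le> max (2 * real n) 8"
    then have "s > 2 * real n" "s > 8"
      by auto
    have "measure_pmf.prob P {I. card I \<le> n} \<le> measure_pmf.prob P {I. real (card (I \<inter> S)) \<le> s / 2}"
    proof (rule measure_pmf.finite_measure_mono_AE)
      show "AE I in measure_pmf P. I \<in> {I. card I \<le> n} \<longrightarrow> I \<in> {I. real (card (I \<inter> S)) \<le> s / 2}"
        unfolding AE_measure_pmf_iff using fin \<open>s > 2 * real n\<close>
        by (auto dest!: card_mono[OF _ Int_lower1[of _ S]])
    qed simp
    also have "\<dots> \<le> 4 / s"
      using prob_card_Int_le_half_le[OF indep S s_def] \<open>s > 8\<close> by simp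
    also have "\<dots> < 1 / 2"
      using \<open>s > 8\<close> by (simp add: field_simps)
    finally show False
      using n by simp
  qed
  then show ?thesis
    by blast
qed

lemma sum_mult_pmf_le_expectation:
  fixes g :: "'a \<Rightarrow> real"
  assumes "finite T" "integrable (measure_pmf P) g" "\<And>x. g x \<ge> 0"
  shows "(\<Sum>x\<in>T. g x * pmf P x) \<le> measure_pmf.expectation P g"
proof -
  have "(\<Sum>x\<in>T. g x * pmf P x) = measure_pmf.expectation P (\<lambda>x. indicator T x * g x)"
    using assms(1) by (subst integral_measure_pmf_real[where A = T]) (auto simp: indicator_def)
  also have "\<dots> \<le> measure_pmf.expectation P g"
    using assms(2,3) integrable_mult_indicator[OF _ assms(2), of T]
    by (intro integral_mono) (auto simp: indicator_def)
  finally show ?thesis .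
qed

theorem finite_moments_if_independent_membership:
  assumes indep: "independent_membership P F" and supp: "\<forall>D\<in>set_pmf P. finite D \<and> D \<subseteq> F"
  shows "finite_moments P"
proof -
  obtain B where B: "\<And>S. finite S \<Longrightarrow> S \<subseteq> F \<Longrightarrow> (\<Sum>f\<in>S. measure_pmf.prob P {I. f \<in> I}) \<le> B"
    using sum_prob_member_bounded[OF indep] supp by blast
  have partial_sum_le: "(\<Sum>D\<in>T. real (card D) ^ k * pmf P D) \<le> (\<Prod>i<k. B + real i)"
    if T: "T \<subseteq> set_pmf P" "finite T" for k T
  proof -
    define S where "S = \<Union>T"
    have S: "finite S" "S \<subseteq> F"
      using T supp unfolding S_def by blast+
    have "(\<Sum>D\<in>T. real (card D) ^ k * pmf P D) = (\<Sum>D\<in>T. real (card (D \<inter> S)) ^ k * pmf P D)"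
      unfolding S_def by (intro sum.cong) (auto simp: Int_absorb2 Union_upper)
    also have "\<dots> \<le> measure_pmf.expectation P (\<lambda>D. real (card (D \<inter> S)) ^ k)"
      using T(2) integrable_card_Int_power[OF S(1)] by (rule sum_mult_pmf_le_expectation) simp
    also have "\<dots> \<le> (\<Prod>i<k. (\<Sum>f\<in>S. measure_pmf.prob P {I. f \<in> I}) + real i)"
      using indep S by (rule expectation_card_Int_power_le)
    also have "\<dots> \<le> (\<Prod>i<k. B + real i)"
      using B[OF S] by (intro prod_mono) (auto simp: sum_nonneg)
    finally show ?thesis .
  qed
  show ?thesis
    unfolding finite_moments_def
  proof (intro allI impI nonneg_bdd_above_summable_on bdd_aboveI2)
    fix k :: nat and T assume "T \<in> {T. T \<subseteq> set_pmf P \<and> finite T}"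
    then show "(\<Sum>D\<in>T. real (card D) ^ k * pmf P D) \<le> (\<Prod>i<k. B + real i)"
      using partial_sum_le by blast
  qed simp
qed

theorem proposition3p3:
  fixes ar :: "'r::finite \<Rightarrow> nat"
    and P :: "('r, 'u::countable) fact set pmf"
  assumes "infinite (UNIV :: 'u set)"
    and "is_PDB ar P"
    and "tuple_independent ar P"
  shows "finite_moments P"
proof (rule finite_moments_if_independent_membership)
  show "independent_membership P {f. is_fact ar f}"
    using assms(3) by (rule tuple_independent_imp_independent_membership)
  show "\<forall>D\<in>set_pmf P. finite D \<and> D \<subseteq> {f. is_fact ar f}"
    using assms(2) by (auto simp: is_PDB_def is_instance_def)
qed

end
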